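(* If $\Gamma$ is $\varepsilon$-free, $\Gamma\vdash^\varepsilon M:\tau$, and $\vdash^\varepsilon M\Downarrow R$, then $R=v$ for some $v\in V^\varepsilon$ with $\Gamma\vdash^\varepsilon v:\tau$. In particular, if $\tau=\triangleright_\alpha\tau_0$, then $v=\blacktriangleright_\alpha N$ for some $N$ with $\Gamma^{-\alpha}\vdash^\varepsilon N:\tau_0$.
   Context: MiniML. Transition variables $\alpha,\beta$; transitions $A,B$ are finite sequences of them ($\varepsilon$ empty). Types $\tau::=\mathbf{int}\mid\mathbf{bool}\mid\tau\to\tau\mid\triangleright_\alpha\tau\mid\forall\alpha.\tau$; terms $M ::= x\mid n\mid bv\mid M=M\mid M+M\mid M-M\mid M*M\mid \mathbf{if}\,M\,\mathbf{then}\,M\,\mathbf{else}\,M\mid \mathbf{fix}\,f{:}\tau\to\sigma.M\mid\lambda x{:}\tau.M\mid MM\mid\blacktriangleright_\alpha M\mid\blacktriangleleft_\alpha M\mid\Lambda\alpha.M\mid M\,A$ ($n\in\mathbb{Z}$, $bv\in\{\mathbf{true},\mathbf{false}\}$). For $B=\beta_1\cdots\beta_k$, $\triangleright_B\tau=\triangleright_{\beta_1}\cdots\triangleright_{\beta_k}\tau$, $\blacktriangleright_BM=\blacktriangleright_{\beta_1}\cdots\blacktriangleright_{\beta_k}M$, $\blacktriangleleft_BM=\blacktriangleleft_{\beta_k}\cdots\blacktriangleleft_{\beta_1}M$; $\tau[\alpha:=B]$, $M[\alpha:=B]$ are capture-avoiding, replacing $\alpha$ by $B$ in transitions and $\triangleright_\alpha,\blacktriangleright_\alpha,\blacktriangleleft_\alpha$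 by $\triangleright_B,\blacktriangleright_B,\blacktriangleleft_B$. A context $\Gamma$ is a finite set $\{x_i:\tau_i@A_i\}$ with distinct $x_i$; it is $\varepsilon$-free if $A\ne\varepsilon$ for every $x:\tau@A\in\Gamma$; $\Gamma^{-A}=\{x:\tau@B\mid x:\tau@AB\in\Gamma\}$. Typing $\Gamma\vdash^AM:\tau$: (Var) $x:\tau@A\in\Gamma\Rightarrow\Gamma\vdash^Ax:\tau$; (Abs),(App) standard at a fixed stage $A$ with the bound variable declared at stage $A$; (Quote) $\Gamma\vdash^{A\alpha}M:\tau\Rightarrow\Gamma\vdash^A\blacktriangleright_\alpha M:\triangleright_\alpha\tau$; (Unquote) $\Gamma\vdash^AM:\triangleright_\alpha\tau\Rightarrow\Gamma\vdash^{A\alpha}\blacktriangleleft_\alpha M:\tau$; (Gen) $\Gamma\vdash^AM:\tau$, $\alpha$ not free in $\Gamma$ or $A$ $\Rightarrow\Gamma\vdash^A\Lambda\alpha.M:\forall\alpha.\tau$; (Ins) $\Gamma\vdash^AM:\forall\alpha.\tau\Rightarrow\Gamma\vdash^AM\,B:\tau[\alpha:=B]$; integer/Boolean constants have types $\mathbf{int}$/$\mathbf{bool}$ at any stage; $+,-,*$ take two $\mathbf{int}$ to $\mathbf{int}$, $=$ two $\mathbf{int}$ to $\mathbf{bool}$; $\mathbf{if}$ takes $\mathbf{bool}$ and two branches of a common type $\tau$ to $\tau$; (Fix) $\Gamma,f:\tau\to\sigma@A\vdash^AM:\tau\to\sigma\Rightarrow\Gamma\vdash^A\mathbf{fix}\,f{:}\tau\to\sigma.M:\tau\to\sigma$.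 Values: $V^\varepsilon ::= n\mid\mathbf{true}\mid\mathbf{false}\mid\lambda x{:}\tau.M\mid\blacktriangleright_\alpha V^\alpha\mid\Lambda\alpha.V^\varepsilon$; for $A\ne\varepsilon$: $V^A::= x\mid n\mid\mathbf{true}\mid\mathbf{false}\mid\lambda x{:}\tau.V^A\mid\mathbf{fix}\,f{:}\tau\to\sigma.V^A\mid V^AV^A\mid\blacktriangleright_\alpha V^{A\alpha}\mid\Lambda\alpha.V^A\mid V^A\,B\mid\blacktriangleleft_\alpha V^{A'}$ (last only if $A'\alpha=A$, $A'\ne\varepsilon$). Big-step evaluation $\vdash^A M\Downarrow R$ ($R$ a term or $\mathbf{err}$), left-to-right call-by-value. At stage $\varepsilon$: constants and $\lambda$-abstractions evaluate to themselves; arithmetic/comparison operators compute on integer results; $\mathbf{if}$ evaluates the condition to $\mathbf{true}$/$\mathbf{false}$ then the corresponding branch; $MN\Downarrow R$ if $M\Downarrow\lambda x{:}\tau.M'$, $N\Downarrow v$, $M'[x:=v]\Downarrow R$; $\mathbf{fix}\,f{:}\tau\to\sigma.M\Downarrow R$ if $M[f:=\mathbf{fix}\,f{:}\tau\to\sigma.M]\Downarrow R$; $M\,B\Downarrow R$ if $M\Downarrow\Lambda\alpha.N$ and $N[\alpha:=B]\Downarrow R$. At any stage $A$: $\vdash^A\blacktriangleright_\alpha M\Downarrow\blacktriangleright_\alpha N$ if $\vdash^{A\alpha}M\Downarrow N$; $\vdash^A\Lambda\alpha.M\Downarrow\Lambda\alpha.N$ if $\vdash^AM\Downarrow N$. $\vdash^\alpha\blacktriangleleft_\alpha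 M\Downarrow N$ if $\vdash^\varepsilon M\Downarrow\blacktriangleright_\alpha N$; $\vdash^{A\alpha}\blacktriangleleft_\alpha M\Downarrow\blacktriangleleft_\alpha N$ if $A\ne\varepsilon$, $\vdash^AM\Downarrow N$. At stage $A\ne\varepsilon$ other constructors are rebuilt with subterms evaluated at stage $A$. $\mathbf{err}$ is produced at stage $\varepsilon$ by a variable, by an ill-shaped intermediate result (non-integer operand, non-Boolean condition, non-$\lambda$ function, non-$\Lambda$ operand of instantiation, non-$\blacktriangleright_\alpha$ operand of $\blacktriangleleft_\alpha$ at stage $\alpha$), by $\blacktriangleleft_\alpha M$ at stage $\varepsilon$, and propagates from any evaluated premise. *)

theory Defs
  imports Main
begin

(* MiniML with de Bruijn indices, both for term variables and for
   transition variables.  A transition is a list of transition variables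
   (indices); [] is epsilon, stage  A alpha  is  A @ [alpha]. *)

type_synonym tvar = nat
type_synonym trans = "tvar list"

datatype ty =
    TInt
  | TBool
  | TFun ty ty
  | TNext tvar ty
  | TAll ty              (* forall alpha. tau ; binds transition index 0 *)

datatype tm =
    MVar nat
  | MNum int
  | MBool bool
  | MEq tm tm
  | MPlus tm tm
  | MMinus tm tm
  | MTimes tm tm
  | MIf tm tm tm
  | MFix ty ty tm        (* fix f:tau->sigma. M ; binds term index 0 *)
  | MLam ty tm
  | MApp tm tm
  | MQuote tvar tm
  | MUnquote tvar tm
  | MTLam tm             (* Lambda alpha. M ; binds transition index 0 *)
  | MTApp tm trans

fun next_seq :: "trans \<Rightarrow> ty \<Rightarrow> ty" where
  "next_seq [] \<tau> = \<tau>"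
| "next_seq (b # bs) \<tau> = TNext b (next_seq bs \<tau>)"

fun quote_seq :: "trans \<Rightarrow> tm \<Rightarrow> tm" where
  "quote_seq [] M = M"
| "quote_seq (b # bs) M = MQuote b (quote_seq bs M)"

(* \<blacktriangleleft>_B M = \<blacktriangleleft>_bk ... \<blacktriangleleft>_b1 M *)
fun unquote_seq :: "trans \<Rightarrow> tm \<Rightarrow> tm" where
  "unquote_seq [] M = M"
| "unquote_seq (b # bs) M = unquote_seq bs (MUnquote b M)"

definition tv_shift :: "nat \<Rightarrow> tvar \<Rightarrow> tvar" where
  "tv_shift c a = (if c \<le> a then Suc a else a)"

primrec ty_tshift :: "nat \<Rightarrow> ty \<Rightarrow> ty" where
  "ty_tshift c TInt = TInt"
| "ty_tshift c TBool = TBool"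
| "ty_tshift c (TFun \<tau> \<sigma>) = TFun (ty_tshift c \<tau>) (ty_tshift c \<sigma>)"
| "ty_tshift c (TNext a \<tau>) = TNext (tv_shift c a) (ty_tshift c \<tau>)"
| "ty_tshift c (TAll \<tau>) = TAll (ty_tshift (Suc c) \<tau>)"

primrec tm_tshift :: "nat \<Rightarrow> tm \<Rightarrow> tm" where
  "tm_tshift c (MVar x) = MVar x"
| "tm_tshift c (MNum n) = MNum n"
| "tm_tshift c (MBool b) = MBool b"
| "tm_tshift c (MEq M N) = MEq (tm_tshift c M) (tm_tshift c N)"
| "tm_tshift c (MPlus M N) = MPlus (tm_tshift c M) (tm_tshift c N)"
| "tm_tshift c (MMinus M N) = MMinus (tm_tshift c M) (tm_tshift c N)"
| "tm_tshift c (MTimes M N) = MTimes (tm_tshift c M) (tm_tshift c N)"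
| "tm_tshift c (MIf L M N) = MIf (tm_tshift c L) (tm_tshift c M) (tm_tshift c N)"
| "tm_tshift c (MFix \<tau> \<sigma> M) = MFix (ty_tshift c \<tau>) (ty_tshift c \<sigma>) (tm_tshift c M)"
| "tm_tshift c (MLam \<tau> M) = MLam (ty_tshift c \<tau>) (tm_tshift c M)"
| "tm_tshift c (MApp M N) = MApp (tm_tshift c M) (tm_tshift c N)"
| "tm_tshift c (MQuote a M) = MQuote (tv_shift c a) (tm_tshift c M)"
| "tm_tshift c (MUnquote a M) = MUnquote (tv_shift c a) (tm_tshift c M)"
| "tm_tshift c (MTLam M) = MTLam (tm_tshift (Suc c) M)"
| "tm_tshift c (MTApp M A) = MTApp (tm_tshift c M) (map (tv_shift c) A)"

definition tv_subst :: "nat \<Rightarrow> trans \<Rightarrow> tvar \<Rightarrow> trans" where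
  "tv_subst j B a = (if a = j then B else if j < a then [a - 1] else [a])"

definition trans_subst :: "nat \<Rightarrow> trans \<Rightarrow> trans \<Rightarrow> trans" where
  "trans_subst j B A = concat (map (tv_subst j B) A)"

primrec ty_tsubst :: "nat \<Rightarrow> trans \<Rightarrow> ty \<Rightarrow> ty" where
  "ty_tsubst j B TInt = TInt"
| "ty_tsubst j B TBool = TBool"
| "ty_tsubst j B (TFun \<tau> \<sigma>) = TFun (ty_tsubst j B \<tau>) (ty_tsubst j B \<sigma>)"
| "ty_tsubst j B (TNext a \<tau>) = next_seq (tv_subst j B a) (ty_tsubst j B \<tau>)"
| "ty_tsubst j B (TAll \<tau>) = TAll (ty_tsubst (Suc j) (map Suc B) \<tau>)"

primrec tm_tsubst :: "nat \<Rightarrow> trans \<Rightarrow> tm \<Rightarrow> tm" where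
  "tm_tsubst j B (MVar x) = MVar x"
| "tm_tsubst j B (MNum n) = MNum n"
| "tm_tsubst j B (MBool b) = MBool b"
| "tm_tsubst j B (MEq M N) = MEq (tm_tsubst j B M) (tm_tsubst j B N)"
| "tm_tsubst j B (MPlus M N) = MPlus (tm_tsubst j B M) (tm_tsubst j B N)"
| "tm_tsubst j B (MMinus M N) = MMinus (tm_tsubst j B M) (tm_tsubst j B N)"
| "tm_tsubst j B (MTimes M N) = MTimes (tm_tsubst j B M) (tm_tsubst j B N)"
| "tm_tsubst j B (MIf L M N) = MIf (tm_tsubst j B L) (tm_tsubst j B M) (tm_tsubst j B N)"
| "tm_tsubst j B (MFix \<tau> \<sigma> M) = MFix (ty_tsubst j B \<tau>) (ty_tsubst j B \<sigma>) (tm_tsubst j B M)"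
| "tm_tsubst j B (MLam \<tau> M) = MLam (ty_tsubst j B \<tau>) (tm_tsubst j B M)"
| "tm_tsubst j B (MApp M N) = MApp (tm_tsubst j B M) (tm_tsubst j B N)"
| "tm_tsubst j B (MQuote a M) = quote_seq (tv_subst j B a) (tm_tsubst j B M)"
| "tm_tsubst j B (MUnquote a M) = unquote_seq (tv_subst j B a) (tm_tsubst j B M)"
| "tm_tsubst j B (MTLam M) = MTLam (tm_tsubst (Suc j) (map Suc B) M)"
| "tm_tsubst j B (MTApp M A) = MTApp (tm_tsubst j B M) (trans_subst j B A)"

primrec tm_shift :: "nat \<Rightarrow> tm \<Rightarrow> tm" where
  "tm_shift c (MVar x) = MVar (if c \<le> x then Suc x else x)"
| "tm_shift c (MNum n) = MNum n"
| "tm_shift c (MBool b) = MBool b"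
| "tm_shift c (MEq M N) = MEq (tm_shift c M) (tm_shift c N)"
| "tm_shift c (MPlus M N) = MPlus (tm_shift c M) (tm_shift c N)"
| "tm_shift c (MMinus M N) = MMinus (tm_shift c M) (tm_shift c N)"
| "tm_shift c (MTimes M N) = MTimes (tm_shift c M) (tm_shift c N)"
| "tm_shift c (MIf L M N) = MIf (tm_shift c L) (tm_shift c M) (tm_shift c N)"
| "tm_shift c (MFix \<tau> \<sigma> M) = MFix \<tau> \<sigma> (tm_shift (Suc c) M)"
| "tm_shift c (MLam \<tau> M) = MLam \<tau> (tm_shift (Suc c) M)"
| "tm_shift c (MApp M N) = MApp (tm_shift c M) (tm_shift c N)"
| "tm_shift c (MQuote a M) = MQuote a (tm_shift c M)"
| "tm_shift c (MUnquote a M) = MUnquote a (tm_shift c M)"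
| "tm_shift c (MTLam M) = MTLam (tm_shift c M)"
| "tm_shift c (MTApp M A) = MTApp (tm_shift c M) A"

primrec tm_subst :: "nat \<Rightarrow> tm \<Rightarrow> tm \<Rightarrow> tm" where
  "tm_subst j v (MVar x) = (if x = j then v else if j < x then MVar (x - 1) else MVar x)"
| "tm_subst j v (MNum n) = MNum n"
| "tm_subst j v (MBool b) = MBool b"
| "tm_subst j v (MEq M N) = MEq (tm_subst j v M) (tm_subst j v N)"
| "tm_subst j v (MPlus M N) = MPlus (tm_subst j v M) (tm_subst j v N)"
| "tm_subst j v (MMinus M N) = MMinus (tm_subst j v M) (tm_subst j v N)"
| "tm_subst j v (MTimes M N) = MTimes (tm_subst j v M) (tm_subst j v N)"
| "tm_subst j v (MIf L M N) = MIf (tm_subst j v L) (tm_subst j v M) (tm_subst j v N)"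
| "tm_subst j v (MFix \<tau> \<sigma> M) = MFix \<tau> \<sigma> (tm_subst (Suc j) (tm_shift 0 v) M)"
| "tm_subst j v (MLam \<tau> M) = MLam \<tau> (tm_subst (Suc j) (tm_shift 0 v) M)"
| "tm_subst j v (MApp M N) = MApp (tm_subst j v M) (tm_subst j v N)"
| "tm_subst j v (MQuote a M) = MQuote a (tm_subst j v M)"
| "tm_subst j v (MUnquote a M) = MUnquote a (tm_subst j v M)"
| "tm_subst j v (MTLam M) = MTLam (tm_subst j (tm_tshift 0 v) M)"
| "tm_subst j v (MTApp M A) = MTApp (tm_subst j v M) A"

(* contexts: term variable index \<mapsto> (type, stage); finite domain assumed separately *)
type_synonym ctx = "nat \<Rightarrow> (ty \<times> trans) option"

definition ctx_ext :: "ctx \<Rightarrow> ty \<Rightarrow> trans \<Rightarrow> ctx" where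
  "ctx_ext \<Gamma> \<tau> A = (\<lambda>i. if i = 0 then Some (\<tau>, A) else \<Gamma> (i - 1))"

definition ctx_tshift :: "ctx \<Rightarrow> ctx" where
  "ctx_tshift \<Gamma> = (\<lambda>i. map_option (\<lambda>(\<tau>, A). (ty_tshift 0 \<tau>, map Suc A)) (\<Gamma> i))"

definition eps_free :: "ctx \<Rightarrow> bool" where
  "eps_free \<Gamma> \<longleftrightarrow> (\<forall>x \<tau> A. \<Gamma> x = Some (\<tau>, A) \<longrightarrow> A \<noteq> [])"

(* \<Gamma>^{-A} = { x:\<tau>@B | x:\<tau>@AB \<in> \<Gamma> } *)
definition ctx_minus :: "ctx \<Rightarrow> trans \<Rightarrow> ctx" where
  "ctx_minus \<Gamma> A = (\<lambda>x. case \<Gamma> x of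
       None \<Rightarrow> None
     | Some (\<tau>, C) \<Rightarrow> if take (length A) C = A then Some (\<tau>, drop (length A) C) else None)"

inductive typing :: "ctx \<Rightarrow> trans \<Rightarrow> tm \<Rightarrow> ty \<Rightarrow> bool" where
  T_Var: "\<Gamma> x = Some (\<tau>, A) \<Longrightarrow> typing \<Gamma> A (MVar x) \<tau>"
| T_Num: "typing \<Gamma> A (MNum n) TInt"
| T_Bool: "typing \<Gamma> A (MBool b) TBool"
| T_Eq: "typing \<Gamma> A M TInt \<Longrightarrow> typing \<Gamma> A N TInt \<Longrightarrow> typing \<Gamma> A (MEq M N) TBool"
| T_Plus: "typing \<Gamma> A M TInt \<Longrightarrow> typing \<Gamma> A N TInt \<Longrightarrow> typing \<Gamma> A (MPlus M N) TInt"
| T_Minus: "typing \<Gamma> A M TInt \<Longrightarrow> typing \<Gamma> A N TInt \<Longrightarrow> typing \<Gamma> A (MMinus M N) TInt"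
| T_Times: "typing \<Gamma> A M TInt \<Longrightarrow> typing \<Gamma> A N TInt \<Longrightarrow> typing \<Gamma> A (MTimes M N) TInt"
| T_If: "typing \<Gamma> A L TBool \<Longrightarrow> typing \<Gamma> A M \<tau> \<Longrightarrow> typing \<Gamma> A N \<tau> \<Longrightarrow> typing \<Gamma> A (MIf L M N) \<tau>"
| T_Fix: "typing (ctx_ext \<Gamma> (TFun \<tau> \<sigma>) A) A M (TFun \<tau> \<sigma>) \<Longrightarrow> typing \<Gamma> A (MFix \<tau> \<sigma> M) (TFun \<tau> \<sigma>)"
| T_Abs: "typing (ctx_ext \<Gamma> \<tau> A) A M \<sigma> \<Longrightarrow> typing \<Gamma> A (MLam \<tau> M) (TFun \<tau> \<sigma>)"
| T_App: "typing \<Gamma> A M (TFun \<tau> \<sigma>) \<Longrightarrow> typing \<Gamma> A N \<tau> \<Longrightarrow> typing \<Gamma> A (MApp M N) \<sigma>"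
| T_Quote: "typing \<Gamma> (A @ [a]) M \<tau> \<Longrightarrow> typing \<Gamma> A (MQuote a M) (TNext a \<tau>)"
| T_Unquote: "typing \<Gamma> A M (TNext a \<tau>) \<Longrightarrow> typing \<Gamma> (A @ [a]) (MUnquote a M) \<tau>"
| T_Gen: "typing (ctx_tshift \<Gamma>) (map Suc A) M \<tau> \<Longrightarrow> typing \<Gamma> A (MTLam M) (TAll \<tau>)"
| T_Ins: "typing \<Gamma> A M (TAll \<tau>) \<Longrightarrow> typing \<Gamma> A (MTApp M B) (ty_tsubst 0 B \<tau>)"

inductive is_val :: "trans \<Rightarrow> tm \<Rightarrow> bool" where
  V0_Num: "is_val [] (MNum n)"
| V0_Bool: "is_val [] (MBool b)"
| V0_Lam: "is_val [] (MLam \<tau> M)"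
| V0_Quote: "is_val [a] V \<Longrightarrow> is_val [] (MQuote a V)"
| V0_TLam: "is_val [] V \<Longrightarrow> is_val [] (MTLam V)"
| V_Var: "A \<noteq> [] \<Longrightarrow> is_val A (MVar x)"
| V_Num: "A \<noteq> [] \<Longrightarrow> is_val A (MNum n)"
| V_Bool: "A \<noteq> [] \<Longrightarrow> is_val A (MBool b)"
| V_Eq: "A \<noteq> [] \<Longrightarrow> is_val A V \<Longrightarrow> is_val A W \<Longrightarrow> is_val A (MEq V W)"
| V_Plus: "A \<noteq> [] \<Longrightarrow> is_val A V \<Longrightarrow> is_val A W \<Longrightarrow> is_val A (MPlus V W)"
| V_Minus: "A \<noteq> [] \<Longrightarrow> is_val A V \<Longrightarrow> is_val A W \<Longrightarrow> is_val A (MMinus V W)"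
| V_Times: "A \<noteq> [] \<Longrightarrow> is_val A V \<Longrightarrow> is_val A W \<Longrightarrow> is_val A (MTimes V W)"
| V_If: "A \<noteq> [] \<Longrightarrow> is_val A U \<Longrightarrow> is_val A V \<Longrightarrow> is_val A W \<Longrightarrow> is_val A (MIf U V W)"
| V_Lam: "A \<noteq> [] \<Longrightarrow> is_val A V \<Longrightarrow> is_val A (MLam \<tau> V)"
| V_Fix: "A \<noteq> [] \<Longrightarrow> is_val A V \<Longrightarrow> is_val A (MFix \<tau> \<sigma> V)"
| V_App: "A \<noteq> [] \<Longrightarrow> is_val A V \<Longrightarrow> is_val A W \<Longrightarrow> is_val A (MApp V W)"
| V_Quote: "A \<noteq> [] \<Longrightarrow> is_val (A @ [a]) V \<Longrightarrow> is_val A (MQuote a V)"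
| V_TLam: "A \<noteq> [] \<Longrightarrow> is_val (map Suc A) V \<Longrightarrow> is_val A (MTLam V)"
| V_TApp: "A \<noteq> [] \<Longrightarrow> is_val A V \<Longrightarrow> is_val A (MTApp V B)"
| V_Unquote: "A' \<noteq> [] \<Longrightarrow> is_val A' V \<Longrightarrow> is_val (A' @ [a]) (MUnquote a V)"

datatype res = Res tm | Err

definition is_num :: "tm \<Rightarrow> bool" where "is_num v \<longleftrightarrow> (\<exists>n. v = MNum n)"
definition is_bool :: "tm \<Rightarrow> bool" where "is_bool v \<longleftrightarrow> (\<exists>b. v = MBool b)"
definition is_lam :: "tm \<Rightarrow> bool" where "is_lam v \<longleftrightarrow> (\<exists>\<tau> M. v = MLam \<tau> M)"
definition is_tlam :: "tm \<Rightarrow> bool" where "is_tlam v \<longleftrightarrow> (\<exists>M. v = MTLam M)"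
definition is_quote :: "tvar \<Rightarrow> tm \<Rightarrow> bool" where "is_quote a v \<longleftrightarrow> (\<exists>N. v = MQuote a N)"

(* binary operators, for uniform treatment of evaluation rules *)
datatype binop = OEq | OPlus | OMinus | OTimes

fun mkbin :: "binop \<Rightarrow> tm \<Rightarrow> tm \<Rightarrow> tm" where
  "mkbin OEq M N = MEq M N"
| "mkbin OPlus M N = MPlus M N"
| "mkbin OMinus M N = MMinus M N"
| "mkbin OTimes M N = MTimes M N"

fun binop_val :: "binop \<Rightarrow> int \<Rightarrow> int \<Rightarrow> tm" where
  "binop_val OEq n m = MBool (n = m)"
| "binop_val OPlus n m = MNum (n + m)"
| "binop_val OMinus n m = MNum (n - m)"
| "binop_val OTimes n m = MNum (n * m)"

inductive eval :: "trans \<Rightarrow> tm \<Rightarrow> res \<Rightarrow> bool" where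
  E_Num: "eval [] (MNum n) (Res (MNum n))"
| E_Bool: "eval [] (MBool b) (Res (MBool b))"
| E_Lam: "eval [] (MLam \<tau> M) (Res (MLam \<tau> M))"
| E_VarErr: "eval [] (MVar x) Err"
| E_Bin: "eval [] M (Res (MNum n)) \<Longrightarrow> eval [] N (Res (MNum m)) \<Longrightarrow>
          eval [] (mkbin op M N) (Res (binop_val op n m))"
| E_BinErr1: "eval [] M Err \<Longrightarrow> eval [] (mkbin op M N) Err"
| E_BinErr2: "eval [] M (Res v) \<Longrightarrow> eval [] N Err \<Longrightarrow> eval [] (mkbin op M N) Err"
| E_BinErr3: "eval [] M (Res v) \<Longrightarrow> eval [] N (Res w) \<Longrightarrow> \<not> (is_num v \<and> is_num w) \<Longrightarrow>
          eval [] (mkbin op M N) Err"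
| E_IfT: "eval [] L (Res (MBool True)) \<Longrightarrow> eval [] M R \<Longrightarrow> eval [] (MIf L M N) R"
| E_IfF: "eval [] L (Res (MBool False)) \<Longrightarrow> eval [] N R \<Longrightarrow> eval [] (MIf L M N) R"
| E_IfErr1: "eval [] L Err \<Longrightarrow> eval [] (MIf L M N) Err"
| E_IfErr2: "eval [] L (Res v) \<Longrightarrow> \<not> is_bool v \<Longrightarrow> eval [] (MIf L M N) Err"
| E_App: "eval [] M (Res (MLam \<tau> M')) \<Longrightarrow> eval [] N (Res v) \<Longrightarrow> eval [] (tm_subst 0 v M') R \<Longrightarrow>
          eval [] (MApp M N) R"
| E_AppErr1: "eval [] M Err \<Longrightarrow> eval [] (MApp M N) Err"
| E_AppErr2: "eval [] M (Res f) \<Longrightarrow> eval [] N Err \<Longrightarrow> eval [] (MApp M N) Err"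
| E_AppErr3: "eval [] M (Res f) \<Longrightarrow> eval [] N (Res v) \<Longrightarrow> \<not> is_lam f \<Longrightarrow> eval [] (MApp M N) Err"
| E_Fix: "eval [] (tm_subst 0 (MFix \<tau> \<sigma> M) M) R \<Longrightarrow> eval [] (MFix \<tau> \<sigma> M) R"
| E_TApp: "eval [] M (Res (MTLam N)) \<Longrightarrow> eval [] (tm_tsubst 0 B N) R \<Longrightarrow> eval [] (MTApp M B) R"
| E_TAppErr1: "eval [] M Err \<Longrightarrow> eval [] (MTApp M B) Err"
| E_TAppErr2: "eval [] M (Res v) \<Longrightarrow> \<not> is_tlam v \<Longrightarrow> eval [] (MTApp M B) Err"
| E_Unq0: "eval [] (MUnquote a M) Err"
| E_Quote: "eval (A @ [a]) M (Res N) \<Longrightarrow> eval A (MQuote a M) (Res (MQuote a N))"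
| E_QuoteErr: "eval (A @ [a]) M Err \<Longrightarrow> eval A (MQuote a M) Err"
| E_TLam: "eval (map Suc A) M (Res N) \<Longrightarrow> eval A (MTLam M) (Res (MTLam N))"
| E_TLamErr: "eval (map Suc A) M Err \<Longrightarrow> eval A (MTLam M) Err"
| E_Unq1: "eval [] M (Res (MQuote a N)) \<Longrightarrow> eval [a] (MUnquote a M) (Res N)"
| E_Unq1Err1: "eval [] M Err \<Longrightarrow> eval [a] (MUnquote a M) Err"
| E_Unq1Err2: "eval [] M (Res v) \<Longrightarrow> \<not> is_quote a v \<Longrightarrow> eval [a] (MUnquote a M) Err"
| E_UnqN: "A \<noteq> [] \<Longrightarrow> eval A M (Res N) \<Longrightarrow> eval (A @ [a]) (MUnquote a M) (Res (MUnquote a N))"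
| E_UnqNErr: "A \<noteq> [] \<Longrightarrow> eval A M Err \<Longrightarrow> eval (A @ [a]) (MUnquote a M) Err"
  (* stages A \<noteq> epsilon: rebuild *)
| F_Var: "A \<noteq> [] \<Longrightarrow> eval A (MVar x) (Res (MVar x))"
| F_Num: "A \<noteq> [] \<Longrightarrow> eval A (MNum n) (Res (MNum n))"
| F_Bool: "A \<noteq> [] \<Longrightarrow> eval A (MBool b) (Res (MBool b))"
| F_Bin: "A \<noteq> [] \<Longrightarrow> eval A M (Res M') \<Longrightarrow> eval A N (Res N') \<Longrightarrow>
          eval A (mkbin op M N) (Res (mkbin op M' N'))"
| F_BinErr1: "A \<noteq> [] \<Longrightarrow> eval A M Err \<Longrightarrow> eval A (mkbin op M N) Err"
| F_BinErr2: "A \<noteq> [] \<Longrightarrow> eval A M (Res M') \<Longrightarrow> eval A N Err \<Longrightarrow> eval A (mkbin op M N) Err"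
| F_If: "A \<noteq> [] \<Longrightarrow> eval A L (Res L') \<Longrightarrow> eval A M (Res M') \<Longrightarrow> eval A N (Res N') \<Longrightarrow>
          eval A (MIf L M N) (Res (MIf L' M' N'))"
| F_IfErr1: "A \<noteq> [] \<Longrightarrow> eval A L Err \<Longrightarrow> eval A (MIf L M N) Err"
| F_IfErr2: "A \<noteq> [] \<Longrightarrow> eval A L (Res L') \<Longrightarrow> eval A M Err \<Longrightarrow> eval A (MIf L M N) Err"
| F_IfErr3: "A \<noteq> [] \<Longrightarrow> eval A L (Res L') \<Longrightarrow> eval A M (Res M') \<Longrightarrow> eval A N Err \<Longrightarrow>
          eval A (MIf L M N) Err"
| F_Fix: "A \<noteq> [] \<Longrightarrow> eval A M (Res N) \<Longrightarrow> eval A (MFix \<tau> \<sigma> M) (Res (MFix \<tau> \<sigma> N))"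
| F_FixErr: "A \<noteq> [] \<Longrightarrow> eval A M Err \<Longrightarrow> eval A (MFix \<tau> \<sigma> M) Err"
| F_Lam: "A \<noteq> [] \<Longrightarrow> eval A M (Res N) \<Longrightarrow> eval A (MLam \<tau> M) (Res (MLam \<tau> N))"
| F_LamErr: "A \<noteq> [] \<Longrightarrow> eval A M Err \<Longrightarrow> eval A (MLam \<tau> M) Err"
| F_App: "A \<noteq> [] \<Longrightarrow> eval A M (Res M') \<Longrightarrow> eval A N (Res N') \<Longrightarrow>
          eval A (MApp M N) (Res (MApp M' N'))"
| F_AppErr1: "A \<noteq> [] \<Longrightarrow> eval A M Err \<Longrightarrow> eval A (MApp M N) Err"
| F_AppErr2: "A \<noteq> [] \<Longrightarrow> eval A M (Res M') \<Longrightarrow> eval A N Err \<Longrightarrow> eval A (MApp M N) Err"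
| F_TApp: "A \<noteq> [] \<Longrightarrow> eval A M (Res N) \<Longrightarrow> eval A (MTApp M B) (Res (MTApp N B))"
| F_TAppErr: "A \<noteq> [] \<Longrightarrow> eval A M Err \<Longrightarrow> eval A (MTApp M B) Err"

end

theory Submission
  imports Defs
begin

(* The heart of the proof is subject reduction for the evaluation relation
   (typing_preservation): if  eval A M R  and M is well typed at stage A under
   an epsilon-free context, then R is a result  Res v  of the same type.  The
   contexts are epsilon-free, so no variable can be met at stage epsilon, and the
   canonical-forms lemmas rule out every other error rule.  The beta steps for
   lambda, fix and Lambda need the usual substitution lemmas, for term variables
   (weakening + substitution) and for transition variables (shifting +
   substitution), which in turn rest on the commutation laws of de Bruijn
   shifting and substitution of transition variables proved first.
   Independently, every result of evaluation is a value (eval_result_is_val).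
   Finally, a quoted value  MQuote a N  of type  TNext a tau0  has a body N that
   is a value at stage [a]; such a body never refers to the stage [a] part of the
   context except through variables living at stages beginning with a, so it can
   be retyped at stage [] under  ctx_minus Gamma [a]  (typing_drop_stage). *)


subsection \<open>Algebra of transition-variable shifting and substitution\<close>

lemma next_seq_append: "next_seq (X @ Y) \<tau> = next_seq X (next_seq Y \<tau>)"
  by (induct X) auto

lemma tv_shift_0: "tv_shift 0 = Suc"
  by (auto simp: tv_shift_def)

lemma tv_shift_Suc_comp [simp]: "tv_shift (Suc c) \<circ> Suc = Suc \<circ> tv_shift c"
  by (auto simp: tv_shift_def)

lemma tv_shift_comm: "i \<le> c \<Longrightarrow> tv_shift (Suc c) (tv_shift i a) = tv_shift i (tv_shift c a)"
  by (auto simp: tv_shift_def)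

lemma ty_tshift_comm: "i \<le> c \<Longrightarrow> ty_tshift (Suc c) (ty_tshift i \<tau>) = ty_tshift i (ty_tshift c \<tau>)"
  by (induct \<tau> arbitrary: i c) (auto simp: tv_shift_comm)

lemma ty_tshift_next_seq: "ty_tshift c (next_seq D \<tau>) = next_seq (map (tv_shift c) D) (ty_tshift c \<tau>)"
  by (induct D) auto

lemma ty_tsubst_next_seq: "ty_tsubst j B (next_seq D \<tau>) = next_seq (trans_subst j B D) (ty_tsubst j B \<tau>)"
  by (induct D) (auto simp: trans_subst_def next_seq_append)

lemma trans_subst_Suc: "trans_subst (Suc j) (map Suc B) (map Suc C) = map Suc (trans_subst j B C)"
  by (induct C) (auto simp: trans_subst_def tv_subst_def)

lemma trans_subst_shift_cancel: "trans_subst c B (map (tv_shift c) A) = A"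
  by (induct A) (auto simp: trans_subst_def tv_subst_def tv_shift_def)

lemma ty_tsubst_shift_cancel: "ty_tsubst c B (ty_tshift c \<tau>) = \<tau>"
  by (induct \<tau> arbitrary: c B) (auto simp: tv_subst_def tv_shift_def)

lemma tv_shift_subst:
  "j \<le> c \<Longrightarrow> map (tv_shift c) (tv_subst j B a) = tv_subst j (map (tv_shift c) B) (tv_shift (Suc c) a)"
  by (auto simp: tv_shift_def tv_subst_def)

lemma ty_tshift_tsubst:
  "j \<le> c \<Longrightarrow> ty_tshift c (ty_tsubst j B \<tau>) = ty_tsubst j (map (tv_shift c) B) (ty_tshift (Suc c) \<tau>)"
  by (induct \<tau> arbitrary: j c B) (auto simp: ty_tshift_next_seq tv_shift_subst)

lemma tv_subst_shift:
  "c \<le> j \<Longrightarrow> tv_subst (Suc j) (map (tv_shift c) B) (tv_shift c a) = map (tv_shift c) (tv_subst j B a)"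
  by (auto simp: tv_shift_def tv_subst_def)

lemma ty_tsubst_tshift:
  "c \<le> j \<Longrightarrow> ty_tsubst (Suc j) (map (tv_shift c) B) (ty_tshift c \<tau>) = ty_tshift c (ty_tsubst j B \<tau>)"
proof (induct \<tau> arbitrary: j c B)
  case (TAll \<tau>)
  from TAll.hyps[of "Suc c" "Suc j" "map Suc B"] TAll.prems show ?case by simp
qed (auto simp: ty_tshift_next_seq tv_subst_shift)

lemma tv_subst_subst:
  "i \<le> j \<Longrightarrow> trans_subst j B (tv_subst i C a)
             = trans_subst i (trans_subst j B C) (tv_subst (Suc j) (map (tv_shift i) B) a)"
  by (auto simp: tv_subst_def trans_subst_shift_cancel) (auto simp: trans_subst_def tv_subst_def)

lemma ty_tsubst_tsubst:
  "i \<le> j \<Longrightarrow> ty_tsubst j B (ty_tsubst i C \<tau>)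
             = ty_tsubst i (trans_subst j B C) (ty_tsubst (Suc j) (map (tv_shift i) B) \<tau>)"
  by (induct \<tau> arbitrary: i j B C)
     (auto simp: ty_tsubst_next_seq tv_subst_subst trans_subst_Suc)


definition ctx_tshift_at :: "nat \<Rightarrow> ctx \<Rightarrow> ctx" where
  "ctx_tshift_at c \<Gamma> = (\<lambda>i. map_option (\<lambda>(\<tau>, A). (ty_tshift c \<tau>, map (tv_shift c) A)) (\<Gamma> i))"

definition ctx_tsubst :: "nat \<Rightarrow> trans \<Rightarrow> ctx \<Rightarrow> ctx" where
  "ctx_tsubst j B \<Gamma> = (\<lambda>i. map_option (\<lambda>(\<tau>, A). (ty_tsubst j B \<tau>, trans_subst j B A)) (\<Gamma> i))"

definition ctx_ins :: "nat \<Rightarrow> ctx \<Rightarrow> ty \<Rightarrow> trans \<Rightarrow> ctx" where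
  "ctx_ins j \<Gamma> \<tau> C = (\<lambda>i. if i < j then \<Gamma> i else if i = j then Some (\<tau>, C) else \<Gamma> (i - 1))"

lemma ctx_tshift_at_0: "ctx_tshift \<Gamma> = ctx_tshift_at 0 \<Gamma>"
  by (simp add: ctx_tshift_def ctx_tshift_at_def tv_shift_0)

lemma ctx_tshift_at_ext:
  "ctx_tshift_at c (ctx_ext \<Gamma> \<tau> A) = ctx_ext (ctx_tshift_at c \<Gamma>) (ty_tshift c \<tau>) (map (tv_shift c) A)"
  by (auto simp: ctx_tshift_at_def ctx_ext_def)

lemma ctx_tshift_at_tshift: "ctx_tshift_at (Suc c) (ctx_tshift \<Gamma>) = ctx_tshift (ctx_tshift_at c \<Gamma>)"
proof (rule ext)
  fix x show "ctx_tshift_at (Suc c) (ctx_tshift \<Gamma>) x = ctx_tshift (ctx_tshift_at c \<Gamma>) x"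
    by (cases "\<Gamma> x")
       (auto simp: ctx_tshift_at_def ctx_tshift_def ty_tshift_comm[of 0, simplified] tv_shift_0)
qed

lemma ctx_tsubst_ext:
  "ctx_tsubst j B (ctx_ext \<Gamma> \<tau> A) = ctx_ext (ctx_tsubst j B \<Gamma>) (ty_tsubst j B \<tau>) (trans_subst j B A)"
  by (auto simp: ctx_tsubst_def ctx_ext_def)

lemma ctx_tsubst_tshift: "ctx_tsubst (Suc j) (map Suc B) (ctx_tshift \<Gamma>) = ctx_tshift (ctx_tsubst j B \<Gamma>)"
proof (rule ext)
  fix x show "ctx_tsubst (Suc j) (map Suc B) (ctx_tshift \<Gamma>) x = ctx_tshift (ctx_tsubst j B \<Gamma>) x"
    using ty_tsubst_tshift[of 0 j B] trans_subst_Suc[of j B]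
    by (cases "\<Gamma> x") (auto simp: ctx_tsubst_def ctx_tshift_def tv_shift_0)
qed

lemma ctx_tsubst_tshift_cancel: "ctx_tsubst 0 B (ctx_tshift \<Gamma>) = \<Gamma>"
proof (rule ext)
  fix x show "ctx_tsubst 0 B (ctx_tshift \<Gamma>) x = \<Gamma> x"
    using ty_tsubst_shift_cancel[of 0 B] trans_subst_shift_cancel[of 0 B]
    by (cases "\<Gamma> x") (auto simp: ctx_tsubst_def ctx_tshift_def tv_shift_0)
qed

lemma ctx_ins_0: "ctx_ins 0 \<Gamma> \<tau> A = ctx_ext \<Gamma> \<tau> A"
  by (auto simp: ctx_ins_def ctx_ext_def fun_eq_iff)

lemma ctx_tshift_ins: "ctx_tshift (ctx_ins c \<Gamma> \<sigma> B) = ctx_ins c (ctx_tshift \<Gamma>) (ty_tshift 0 \<sigma>) (map Suc B)"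
  by (auto simp: ctx_tshift_def ctx_ins_def fun_eq_iff)

lemma ctx_ext_ins: "ctx_ext (ctx_ins c \<Gamma> \<sigma> B) \<tau> A = ctx_ins (Suc c) (ctx_ext \<Gamma> \<tau> A) \<sigma> B"
  by (auto simp: ctx_ext_def ctx_ins_def fun_eq_iff)

lemma eps_free_tshift: "eps_free \<Gamma> \<Longrightarrow> eps_free (ctx_tshift \<Gamma>)"
  by (auto simp: eps_free_def ctx_tshift_def)

lemma eps_free_ext: "eps_free \<Gamma> \<Longrightarrow> A \<noteq> [] \<Longrightarrow> eps_free (ctx_ext \<Gamma> \<tau> A)"
  by (auto simp: eps_free_def ctx_ext_def)


inductive_cases typing_VarE: "typing \<Gamma> A (MVar x) \<tau>"
inductive_cases typing_NumE: "typing \<Gamma> A (MNum n) \<tau>"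
inductive_cases typing_BoolE: "typing \<Gamma> A (MBool b) \<tau>"
inductive_cases typing_EqE: "typing \<Gamma> A (MEq M N) \<tau>"
inductive_cases typing_PlusE: "typing \<Gamma> A (MPlus M N) \<tau>"
inductive_cases typing_MinusE: "typing \<Gamma> A (MMinus M N) \<tau>"
inductive_cases typing_TimesE: "typing \<Gamma> A (MTimes M N) \<tau>"
inductive_cases typing_IfE: "typing \<Gamma> A (MIf L M N) \<tau>"
inductive_cases typing_FixE: "typing \<Gamma> A (MFix \<tau>1 \<tau>2 M) \<tau>"
inductive_cases typing_LamE: "typing \<Gamma> A (MLam \<tau>1 M) \<tau>"
inductive_cases typing_AppE: "typing \<Gamma> A (MApp M N) \<tau>"
inductive_cases typing_QuoteE: "typing \<Gamma> A (MQuote a M) \<tau>"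
inductive_cases typing_UnquoteE: "typing \<Gamma> A (MUnquote a M) \<tau>"
inductive_cases typing_TLamE: "typing \<Gamma> A (MTLam M) \<tau>"
inductive_cases typing_TAppE: "typing \<Gamma> A (MTApp M B) \<tau>"

lemma typing_mkbin_iff:
  "typing \<Gamma> A (mkbin op M N) \<tau> \<longleftrightarrow>
     typing \<Gamma> A M TInt \<and> typing \<Gamma> A N TInt \<and> \<tau> = (if op = OEq then TBool else TInt)"
  by (cases op) (auto elim: typing_EqE typing_PlusE typing_MinusE typing_TimesE intro: typing.intros)

lemma typing_binop_val: "typing \<Gamma> A (binop_val op n m) (if op = OEq then TBool else TInt)"
  by (cases op) (auto intro: typing.intros)

lemma typing_quote_seq: "typing \<Gamma> (A @ C) M \<tau> \<Longrightarrow> typing \<Gamma> A (quote_seq C M) (next_seq C \<tau>)"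
  by (induct C arbitrary: A) (auto intro!: typing.T_Quote)

lemma typing_unquote_seq: "typing \<Gamma> A M (next_seq C \<tau>) \<Longrightarrow> typing \<Gamma> (A @ C) (unquote_seq C M) \<tau>"
proof (induct C arbitrary: A M)
  case (Cons b bs)
  then have "typing \<Gamma> (A @ [b]) (MUnquote b M) (next_seq bs \<tau>)" by (auto intro: typing.T_Unquote)
  from Cons.hyps[OF this] show ?case by simp
qed simp

lemma typing_tshift:
  "typing \<Gamma> A M \<tau> \<Longrightarrow>
   typing (ctx_tshift_at c \<Gamma>) (map (tv_shift c) A) (tm_tshift c M) (ty_tshift c \<tau>)"
proof (induct arbitrary: c rule: typing.induct)
  case (T_Var \<Gamma> x \<tau> A)
  then show ?case by (auto intro!: typing.T_Var simp: ctx_tshift_at_def)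
next
  case (T_Unquote \<Gamma> A M a \<tau>)
  then show ?case using typing.T_Unquote by fastforce
next
  case (T_Gen \<Gamma> A M \<tau>)
  from T_Gen.hyps(2)[of "Suc c"] show ?case
    by (auto intro!: typing.T_Gen simp: ctx_tshift_at_tshift)
next
  case (T_Ins \<Gamma> A M \<tau> B)
  from typing.T_Ins[OF T_Ins.hyps(2)[of c, simplified], of "map (tv_shift c) B"] show ?case
    by (simp add: ty_tshift_tsubst)
qed (auto intro!: typing.intros simp: ctx_tshift_at_ext)

lemma typing_tsubst:
  "typing \<Gamma> A M \<tau> \<Longrightarrow>
   typing (ctx_tsubst j B \<Gamma>) (trans_subst j B A) (tm_tsubst j B M) (ty_tsubst j B \<tau>)"
proof (induct arbitrary: j B rule: typing.induct)
  case (T_Var \<Gamma> x \<tau> A)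
  then show ?case by (auto intro!: typing.T_Var simp: ctx_tsubst_def)
next
  case (T_Quote \<Gamma> A a M \<tau>)
  then show ?case by (auto intro!: typing_quote_seq simp: trans_subst_def)
next
  case (T_Unquote \<Gamma> A M a \<tau>)
  from typing_unquote_seq[OF T_Unquote.hyps(2)[of j B, simplified]] show ?case
    by (simp add: trans_subst_def)
next
  case (T_Gen \<Gamma> A M \<tau>)
  from T_Gen.hyps(2)[of "Suc j" "map Suc B"] show ?case
    by (auto intro!: typing.T_Gen simp: ctx_tsubst_tshift trans_subst_Suc)
next
  case (T_Ins \<Gamma> A M \<tau> C)
  from typing.T_Ins[OF T_Ins.hyps(2)[of j B, simplified], of "trans_subst j B C"] show ?case
    by (simp add: ty_tsubst_tsubst tv_shift_0)
qed (auto intro!: typing.intros simp: ctx_tsubst_ext)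

lemma typing_weaken:
  "typing \<Gamma> A M \<tau> \<Longrightarrow> typing (ctx_ins c \<Gamma> \<sigma> B) A (tm_shift c M) \<tau>"
proof (induct arbitrary: c \<sigma> B rule: typing.induct)
  case (T_Var \<Gamma> x \<tau> A)
  then show ?case by (auto intro!: typing.T_Var simp: ctx_ins_def)
qed (auto intro!: typing.intros simp: ctx_tshift_ins ctx_ext_ins)

lemma typing_subst:
  "typing \<Gamma>' A M \<sigma> \<Longrightarrow> \<Gamma>' = ctx_ins j \<Gamma> \<tau> C \<Longrightarrow> typing \<Gamma> C v \<tau> \<Longrightarrow>
   typing \<Gamma> A (tm_subst j v M) \<sigma>"
proof (induct arbitrary: \<Gamma> j v \<tau> C rule: typing.induct)
  case (T_Var \<Gamma>' x \<sigma> A)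
  then show ?case by (auto intro!: typing.T_Var simp: ctx_ins_def split: if_splits)
next
  case (T_Fix \<Gamma>' \<sigma>1 \<sigma>2 A M)
  have "ctx_ext \<Gamma>' (TFun \<sigma>1 \<sigma>2) A = ctx_ins (Suc j) (ctx_ext \<Gamma> (TFun \<sigma>1 \<sigma>2) A) \<tau> C"
    using T_Fix.prems(1) by (simp add: ctx_ext_ins)
  moreover have "typing (ctx_ext \<Gamma> (TFun \<sigma>1 \<sigma>2) A) C (tm_shift 0 v) \<tau>"
    using typing_weaken[OF T_Fix.prems(2), of 0] by (simp add: ctx_ins_0)
  ultimately show ?case using T_Fix.hyps(2) by (simp add: typing.T_Fix)
next
  case (T_Abs \<Gamma>' \<sigma>1 A M \<sigma>2)
  have "ctx_ext \<Gamma>' \<sigma>1 A = ctx_ins (Suc j) (ctx_ext \<Gamma> \<sigma>1 A) \<tau> C"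
    using T_Abs.prems(1) by (simp add: ctx_ext_ins)
  moreover have "typing (ctx_ext \<Gamma> \<sigma>1 A) C (tm_shift 0 v) \<tau>"
    using typing_weaken[OF T_Abs.prems(2), of 0] by (simp add: ctx_ins_0)
  ultimately show ?case using T_Abs.hyps(2) by (simp add: typing.T_Abs)
next
  case (T_Gen \<Gamma>' A M \<sigma>)
  have "ctx_tshift \<Gamma>' = ctx_ins j (ctx_tshift \<Gamma>) (ty_tshift 0 \<tau>) (map Suc C)"
    using T_Gen.prems(1) by (simp add: ctx_tshift_ins)
  moreover have "typing (ctx_tshift \<Gamma>) (map Suc C) (tm_tshift 0 v) (ty_tshift 0 \<tau>)"
    using typing_tshift[OF T_Gen.prems(2), of 0] by (simp add: ctx_tshift_at_0 tv_shift_0)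
  ultimately show ?case using T_Gen.hyps(2) by (simp add: typing.T_Gen)
next
  case (T_App \<Gamma>' A M \<sigma>1 \<sigma>2 N)
  then show ?case by (metis typing.T_App tm_subst.simps(11))
qed (auto intro: typing.intros)


lemma typing_beta:
  assumes "typing \<Gamma> A (MLam \<rho> M) (TFun \<tau> \<sigma>)" and "typing \<Gamma> A v \<tau>"
  shows "typing \<Gamma> A (tm_subst 0 v M) \<sigma>"
proof -
  from assms(1) have "typing (ctx_ins 0 \<Gamma> \<tau> A) A M \<sigma>"
    by (auto elim: typing_LamE simp: ctx_ins_0)
  from typing_subst[OF this refl assms(2)] show ?thesis .
qed

lemma typing_fix_unfold:
  assumes "typing \<Gamma> A (MFix \<tau> \<sigma> M) \<rho>"
  shows "typing \<Gamma> A (tm_subst 0 (MFix \<tau> \<sigma> M) M) \<rho>"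
proof -
  from assms have "typing (ctx_ins 0 \<Gamma> (TFun \<tau> \<sigma>) A) A M (TFun \<tau> \<sigma>)" and "\<rho> = TFun \<tau> \<sigma>"
    by (auto elim: typing_FixE simp: ctx_ins_0)
  with typing_subst assms show ?thesis by blast
qed

lemma typing_tbeta:
  assumes "typing \<Gamma> A (MTLam N) (TAll \<tau>)"
  shows "typing \<Gamma> A (tm_tsubst 0 B N) (ty_tsubst 0 B \<tau>)"
proof -
  from assms have "typing (ctx_tshift \<Gamma>) (map Suc A) N \<tau>"
    by (auto elim: typing_TLamE)
  from typing_tsubst[OF this, of 0 B] show ?thesis
    using trans_subst_shift_cancel[of 0 B A] by (simp add: ctx_tsubst_tshift_cancel tv_shift_0)
qed


subsection \<open>Values and canonical forms\<close>

inductive_cases is_val_QuoteE: "is_val B (MQuote a V)"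

lemma is_val_mkbin: "A \<noteq> [] \<Longrightarrow> is_val A V \<Longrightarrow> is_val A W \<Longrightarrow> is_val A (mkbin op V W)"
  by (cases op) (auto intro: is_val.intros)

lemma is_val_binop_val: "is_val [] (binop_val op n m)"
  by (cases op) (auto intro: is_val.intros)

lemma eval_result_is_val: "eval A M (Res v) \<Longrightarrow> is_val A v"
proof (induct A M "Res v" arbitrary: v rule: eval.induct)
  case (E_Unq1 M a N)
  then show ?case by (auto elim: is_val_QuoteE)
next
  case (E_TLam A M N)
  then show ?case by (cases "A = []") (auto intro: is_val.intros)
next
  case (E_Quote A a M N)
  then show ?case by (cases "A = []") (auto intro: is_val.intros)
qed (auto intro: is_val.intros is_val_mkbin is_val_binop_val)

lemma canonical_int: "is_val [] v \<Longrightarrow> typing \<Gamma> [] v TInt \<Longrightarrow> is_num v"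
  by (induct "[]::trans" v rule: is_val.induct)
     (auto simp: is_num_def elim: typing_LamE typing_BoolE typing_QuoteE typing_TLamE)

lemma canonical_bool: "is_val [] v \<Longrightarrow> typing \<Gamma> [] v TBool \<Longrightarrow> is_bool v"
  by (induct "[]::trans" v rule: is_val.induct)
     (auto simp: is_bool_def elim: typing_LamE typing_NumE typing_QuoteE typing_TLamE)

lemma canonical_fun: "is_val [] v \<Longrightarrow> typing \<Gamma> [] v (TFun \<tau> \<sigma>) \<Longrightarrow> is_lam v"
  by (induct "[]::trans" v rule: is_val.induct)
     (auto simp: is_lam_def elim: typing_NumE typing_BoolE typing_QuoteE typing_TLamE)

lemma canonical_all: "is_val [] v \<Longrightarrow> typing \<Gamma> [] v (TAll \<tau>) \<Longrightarrow> is_tlam v"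
  by (induct "[]::trans" v rule: is_val.induct)
     (auto simp: is_tlam_def elim: typing_NumE typing_BoolE typing_QuoteE typing_LamE)

lemma canonical_next: "is_val [] v \<Longrightarrow> typing \<Gamma> [] v (TNext a \<tau>) \<Longrightarrow> is_quote a v"
  by (induct "[]::trans" v rule: is_val.induct)
     (auto simp: is_quote_def elim: typing_NumE typing_BoolE typing_QuoteE typing_LamE typing_TLamE)


(* Error rules are refuted by epsilon-freeness (variables at
   stage epsilon) or by canonical forms (ill-shaped intermediate values). *)
lemma typing_preservation:
  "eval A M R \<Longrightarrow> eps_free \<Gamma> \<Longrightarrow> typing \<Gamma> A M \<tau> \<Longrightarrow> \<exists>v. R = Res v \<and> typing \<Gamma> A v \<tau>"
proof (induct arbitrary: \<Gamma> \<tau> rule: eval.induct)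
  (* a variable at stage epsilon is untypable in an epsilon-free context *)
  case (E_VarErr x)
  then show ?case by (auto elim!: typing_VarE simp: eps_free_def)
next
  case (E_BinErr3 M v N w op)
  from E_BinErr3.prems have "typing \<Gamma> [] M TInt" "typing \<Gamma> [] N TInt"
    by (simp_all add: typing_mkbin_iff)
  with E_BinErr3.hyps E_BinErr3.prems(1) have "is_num v" "is_num w"
    by (fastforce intro: canonical_int eval_result_is_val)+
  with E_BinErr3.hyps(5) show ?case by simp
next
  case (E_IfErr2 L v M N)
  then show ?case by (auto elim!: typing_IfE dest: eval_result_is_val canonical_bool)
next
  case (E_App M \<rho> M' N v R)
  from E_App.prems obtain \<sigma> where "typing \<Gamma> [] M (TFun \<sigma> \<tau>)" "typing \<Gamma> [] N \<sigma>"
    by (auto elim: typing_AppE)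
  with E_App.hyps E_App.prems(1) have "typing \<Gamma> [] (tm_subst 0 v M') \<tau>"
    by (metis res.inject typing_beta)
  with E_App.hyps(6) E_App.prems(1) show ?case by blast
next
  case (E_AppErr3 M f N v)
  then show ?case by (auto elim!: typing_AppE dest: eval_result_is_val canonical_fun)
next
  case (E_Fix \<tau>1 \<sigma> M R)
  then show ?case by (blast intro: typing_fix_unfold)
next
  case (E_TApp M N B R)
  from E_TApp.prems(2) obtain \<tau>0 where "typing \<Gamma> [] M (TAll \<tau>0)" and "\<tau> = ty_tsubst 0 B \<tau>0"
    by (auto elim: typing_TAppE)
  with E_TApp.hyps(2) E_TApp.prems(1) have "typing \<Gamma> [] (tm_tsubst 0 B N) \<tau>"
    by (auto intro: typing_tbeta)
  with E_TApp.hyps(4) E_TApp.prems(1) show ?case by blast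
next
  case (E_TAppErr2 M v B)
  then show ?case by (auto elim!: typing_TAppE dest: eval_result_is_val canonical_all)
next
  case (E_Unq1 M a N)
  then show ?case by (fastforce elim: typing_UnquoteE typing_QuoteE)
next
  case (E_Unq1Err2 M v a)
  then show ?case by (fastforce elim: typing_UnquoteE dest: eval_result_is_val canonical_next)
next
  (* binders: the extended context is still epsilon-free, since the new entry
     lives at a non-empty stage (or all stages are renamed by Suc) *)
  case (E_TLam A M N)
  then show ?case by (auto elim!: typing_TLamE intro!: typing.T_Gen dest: eps_free_tshift)
next
  case (E_TLamErr A M)
  then show ?case by (auto elim!: typing_TLamE dest: eps_free_tshift)
next
  case (F_Lam A M N \<tau>1)
  then show ?case by (auto elim!: typing_LamE intro!: typing.T_Abs dest: eps_free_ext)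
next
  case (F_LamErr A M \<tau>1)
  then show ?case by (auto elim!: typing_LamE dest: eps_free_ext)
next
  case (F_Fix A M N \<tau>1 \<sigma>)
  then show ?case by (auto elim!: typing_FixE intro!: typing.T_Fix dest: eps_free_ext)
next
  case (F_FixErr A M \<tau>1 \<sigma>)
  then show ?case by (auto elim!: typing_FixE dest: eps_free_ext)
qed (fastforce simp: typing_mkbin_iff typing_binop_val
               elim!: typing_IfE typing_AppE typing_QuoteE typing_UnquoteE typing_TAppE
               intro: typing.intros)+


subsection \<open>Lowering the body of a quoted value\<close>

inductive_cases is_val_EqE: "is_val B (MEq V W)"
inductive_cases is_val_PlusE: "is_val B (MPlus V W)"
inductive_cases is_val_MinusE: "is_val B (MMinus V W)"
inductive_cases is_val_TimesE: "is_val B (MTimes V W)"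
inductive_cases is_val_IfE: "is_val B (MIf U V W)"
inductive_cases is_val_LamE: "is_val B (MLam \<tau> V)"
inductive_cases is_val_FixE: "is_val B (MFix \<tau> \<sigma> V)"
inductive_cases is_val_AppE: "is_val B (MApp V W)"
inductive_cases is_val_UnquoteE: "is_val B (MUnquote a V)"
inductive_cases is_val_TLamE: "is_val B (MTLam V)"
inductive_cases is_val_TAppE: "is_val B (MTApp V C)"

lemma ctx_minus_ext: "ctx_minus (ctx_ext \<Gamma> \<sigma> (a # A)) [a] = ctx_ext (ctx_minus \<Gamma> [a]) \<sigma> A"
  by (auto simp: ctx_minus_def ctx_ext_def fun_eq_iff)

lemma ctx_minus_tshift: "ctx_minus (ctx_tshift \<Gamma>) [Suc a] = ctx_tshift (ctx_minus \<Gamma> [a])"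
proof (rule ext)
  fix x show "ctx_minus (ctx_tshift \<Gamma>) [Suc a] x = ctx_tshift (ctx_minus \<Gamma> [a]) x"
  proof (cases "\<Gamma> x")
    case (Some p)
    then show ?thesis by (cases p; cases "snd p") (auto simp: ctx_minus_def ctx_tshift_def)
  qed (simp add: ctx_minus_def ctx_tshift_def)
qed

(* A value at stage a # A contains no unquotation escaping to stage epsilon, so its
   typing derivation only uses stages beginning with a and can be re-based:
   Gamma |-^(a A) N : tau  implies  Gamma^(-a) |-^A N : tau. *)
lemma typing_drop_stage:
  "typing \<Gamma> B N \<tau> \<Longrightarrow> B = a # A \<Longrightarrow> is_val B N \<Longrightarrow> typing (ctx_minus \<Gamma> [a]) A N \<tau>"
proof (induct arbitrary: a A rule: typing.induct)
  case (T_Var \<Gamma> x \<tau> B)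
  then show ?case by (auto intro!: typing.T_Var simp: ctx_minus_def)
next
  case (T_Unquote \<Gamma> B M b \<tau>)
  from T_Unquote.prems(2) have "B \<noteq> []" "is_val B M" by (auto elim: is_val_UnquoteE)
  then obtain B' where B': "B = a # B'" "A = B' @ [b]" using T_Unquote.prems(1)
    by (cases B) auto
  from T_Unquote.hyps(2)[OF B'(1) \<open>is_val B M\<close>] B'(2) show ?case
    by (auto intro: typing.T_Unquote)
next
  case (T_Gen \<Gamma> B M \<tau>)
  from T_Gen.prems have "is_val (map Suc B) M" by (auto elim: is_val_TLamE)
  with T_Gen.hyps(2)[of "Suc a" "map Suc A"] T_Gen.prems(1) show ?case
    by (auto intro!: typing.T_Gen simp: ctx_minus_tshift)
qed (auto intro: typing.intros simp: ctx_minus_ext[symmetric]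
          elim!: is_val_EqE is_val_PlusE is_val_MinusE is_val_TimesE is_val_IfE is_val_LamE
                 is_val_FixE is_val_AppE is_val_QuoteE is_val_TAppE)


theorem mainTheorem13:
  fixes \<Gamma> :: ctx and M :: tm and \<tau> :: ty and R :: res
  assumes "finite (dom \<Gamma>)"
    and "eps_free \<Gamma>"
    and "typing \<Gamma> [] M \<tau>"
    and "eval [] M R"
  shows "\<exists>v. R = Res v \<and> is_val [] v \<and> typing \<Gamma> [] v \<tau> \<and>
           (\<forall>a \<tau>0. \<tau> = TNext a \<tau>0 \<longrightarrow>
              (\<exists>N. v = MQuote a N \<and> typing (ctx_minus \<Gamma> [a]) [] N \<tau>0))"
proof -
  from typing_preservation[OF assms(4,2,3)] obtain v where R: "R = Res v" and v_ty: "typing \<Gamma> [] v \<tau>"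
    by blast
  from assms(4) R have v_val: "is_val [] v" by (simp add: eval_result_is_val)
  have "\<exists>N. v = MQuote a N \<and> typing (ctx_minus \<Gamma> [a]) [] N \<tau>0" if \<tau>: "\<tau> = TNext a \<tau>0" for a \<tau>0
  proof -
    from canonical_next[OF v_val v_ty[unfolded \<tau>]] obtain N where v: "v = MQuote a N"
      by (auto simp: is_quote_def)
    from v_ty \<tau> v have "typing \<Gamma> [a] N \<tau>0" by (auto elim: typing_QuoteE)
    moreover from v_val v have "is_val [a] N" by (auto elim: is_val_QuoteE)
    ultimately have "typing (ctx_minus \<Gamma> [a]) [] N \<tau>0" using typing_drop_stage[of \<Gamma> "[a]" N \<tau>0 a "[]"] by simp
    with v show ?thesis by blast
  qed
  with R v_val v_ty show ?thesis by blast
qed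

end
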